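(* For $\psi\in[0,\pi]$ and $n\in\mathbb N_0$ let $\mu_n(\psi)=\sqrt{\sum_{j=-n}^n\frac{8\pi^2}{2n+1}|\widetilde P_n^j(0)|^2 s_j(\psi)^2}$. Then for odd $n=2m-1$, \[ \lim_{m\to\infty}\frac{4m-1}{4}\,\mu_{2m-1}(\psi)^2=\begin{cases}4\pi\psi,&\psi\in[0,\frac\pi2],\\ 4\pi^2-4\pi\psi,&\psi\in[\frac\pi2,\pi],\end{cases} \] and for even $n=2m$, \[ \lim_{m\to\infty}\frac{4m+1}{4}\,\mu_{2m}(\psi)^2=\begin{cases}4\pi\psi,&\psi\in[0,\frac\pi2],\\ 12\pi\psi-4\pi^2,&\psi\in[\frac\pi2,\pi].\end{cases} \]
   Context: Associated Legendre functions $P_n^k(t)=\frac{(-1)^k}{2^n n!}(1-t^2)^{k/2}\frac{d^{n+k}}{dt^{n+k}}(t^2-1)^n$ for $k=0,\dots,n$; normalized $\widetilde P_n^k=\sqrt{\frac{2n+1}{4\pi}\frac{(n-k)!}{(n+k)!}}P_n^k$ and $\widetilde P_n^{-k}=(-1)^k\widetilde P_n^k$. Let $s_0(\psi)=2\psi$ and $s_j(\psi)=\frac{2\sin(j\psi)}{j}$ for $j\ne0$. (For $\psi\in(0,\pi)$, $\mu_n(\psi)$ are the singular values of the fixed-length great-circle-arc transform $f\mapsto\int_{-\psi}^{\psi}f(Q^{-1}(\cos\varphi,\sin\varphi,0)^\top)\,d\varphi$, $Q\in\mathrm{SO}(3)$.) *)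

theory Defs
  imports "HOL-Analysis.Analysis" "HOL-Computational_Algebra.Polynomial"
begin

definition assoc_legendre :: "nat \<Rightarrow> nat \<Rightarrow> real \<Rightarrow> real" where
  "assoc_legendre n k t =
     (-1) ^ k / (2 ^ n * fact n) * (1 - t\<^sup>2) powr (real k / 2) *
     poly ((pderiv ^^ (n + k)) ([:-1, 0, 1:] ^ n)) t"

definition norm_assoc_legendre :: "nat \<Rightarrow> int \<Rightarrow> real \<Rightarrow> real" where
  "norm_assoc_legendre n j t =
     (let k = nat \<bar>j\<bar>;
          v = sqrt ((2 * real n + 1) / (4 * pi) * (fact (n - k) / fact (n + k))) *
              assoc_legendre n k t
      in if j \<ge> 0 then v else (-1) ^ k * v)"

definition s_fun :: "int \<Rightarrow> real \<Rightarrow> real" where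
  "s_fun j \<psi> = (if j = 0 then 2 * \<psi> else 2 * sin (real_of_int j * \<psi>) / real_of_int j)"

definition mu :: "nat \<Rightarrow> real \<Rightarrow> real" where
  "mu n \<psi> = sqrt (\<Sum>j = - int n..int n.
      8 * pi\<^sup>2 / (2 * real n + 1) * \<bar>norm_assoc_legendre n j 0\<bar>\<^sup>2 * (s_fun j \<psi>)\<^sup>2)"

end

theory Submission
  imports Defs "HOL-Real_Asymp.Real_Asymp"
begin

text \<open>
  Write n = 2m - d with d \<in> {0, 1} and c(a) = (2a choose a) / 4^a. The normalized Legendre
  function vanishes at 0 unless n + j is even, and for j = \<plusminus>(2i + d) one has
  4\<pi>/(2n+1) |P(n, j, 0)|^2 = c(m+i) c(m-d-i). Hence (2n+1)/4 \<mu>(n, \<psi>)^2 is a finite sum over i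
  of the weights (2n+1) c(m+i) c(m-d-i) times multiples of s(2i+d, \<psi>)^2. By Wallis' product
  (2a+1) c(a)^2 \<rightarrow> 2/\<pi>, so every weight tends to 4/\<pi>; it is also bounded by 6 sqrt i uniformly
  in m, and Tannery's theorem lets the limit pass through the sum. The resulting series are
  evaluated with \<Sum> sin(nx)^2/n^2 = x(\<pi> - x)/2 on [0, \<pi>], obtained by integrating the Abel
  means \<Sum> r^n sin(2nt)/n = arctan (r sin 2t / (1 - r cos 2t)) and letting r \<rightarrow> 1.
\<close>

section \<open>A Fourier series\<close>

lemma sums_power_sin_div_arctan:
  fixes r \<theta> :: real
  assumes r: "0 \<le> r" "r < 1"
  shows "(\<lambda>n. r ^ n * sin (real n * \<theta>) / real n) sums arctan (r * sin \<theta> / (1 - r * cos \<theta>))"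
proof -
  define w where "w = complex_of_real r * cis \<theta>"
  have "norm (- w) < 1" using r by (simp add: w_def norm_mult)
  from Ln_series[OF this] have "(\<lambda>n. - (w ^ n / of_nat n)) sums Ln (1 - w)"
    by (simp add: power_minus' divide_inverse mult_ac)
  from sums_Im[OF sums_minus[OF this]]
  have "(\<lambda>n. r ^ n * sin (real n * \<theta>) / real n) sums (- Im (Ln (1 - w)))"
    by (simp add: w_def power_mult_distrib Complex.DeMoivre)
  moreover have re_pos: "Re (1 - w) > 0"
    using r mult_left_le[of "cos \<theta>" r] by (simp add: w_def)
  then have "Im (Ln (1 - w)) = arctan (Im (1 - w) / Re (1 - w))"
    using Arg_eq_Im_Ln[of "1 - w"] arg_conv_arctan[of "1 - w"] by force
  ultimately show ?thesis by (simp add: w_def arctan_minus)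
qed

lemma has_integral_arctan_power_sin_sq:
  fixes r x :: real
  assumes r: "0 \<le> r" "r < 1" and x: "0 \<le> x"
  shows "((\<lambda>t. arctan (r * sin (2 * t) / (1 - r * cos (2 * t)))) has_integral
           (\<Sum>n. r ^ n * (sin (real n * x))\<^sup>2 / (real n)\<^sup>2)) {0..x}"
proof -
  define f where "f n y = r ^ n * (sin (real n * y))\<^sup>2 / (real n)\<^sup>2" for n y
  define f' where "f' n y = r ^ n * sin (real n * (2 * y)) / real n" for n y
  have der: "(f n has_field_derivative f' n y) (at y within UNIV)" for n y
  proof (cases "n = 0")
    case False
    have "sin (real n * (2 * y)) = 2 * sin (real n * y) * cos (real n * y)"
      using sin_double[of "real n * y"] by (simp add: algebra_simps)
    then show ?thesis using False unfolding f_def f'_def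
      by (auto intro!: derivative_eq_intros simp: power2_eq_square field_simps)
  next
    case True
    then have "f n = (\<lambda>_. 0)" by (simp add: f_def fun_eq_iff)
    then show ?thesis using True by (simp add: f'_def)
  qed
  have "uniformly_convergent_on UNIV (\<lambda>n y. \<Sum>i<n. f' i y)"
  proof (rule Weierstrass_m_test'[where M="\<lambda>n. r ^ n"])
    fix n and y :: real
    have "\<bar>sin (real n * (2 * y)) / real n\<bar> \<le> 1"
      by (cases "n = 0") (auto simp: abs_divide divide_le_eq_1 intro: order.trans[OF abs_sin_le_one])
    from mult_left_mono[OF this, of "r ^ n"] show "norm (f' n y) \<le> r ^ n"
      using r by (simp add: f'_def abs_mult)
  qed (use r in \<open>simp add: summable_geometric\<close>)
  from has_field_derivative_series'(2)[OF convex_UNIV der this _, of 0]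
  have "((\<lambda>y. \<Sum>n. f n y) has_field_derivative (\<Sum>n. f' n y)) (at y)" for y
    by (simp add: f_def)
  moreover have "(\<Sum>n. f' n y) = arctan (r * sin (2 * y) / (1 - r * cos (2 * y)))" for y
    using sums_unique[OF sums_power_sin_div_arctan[OF r, of "2 * y"]] by (simp add: f'_def)
  ultimately have "((\<lambda>t. arctan (r * sin (2 * t) / (1 - r * cos (2 * t)))) has_integral
                    ((\<Sum>n. f n x) - (\<Sum>n. f n 0))) {0..x}"
    by (intro fundamental_theorem_of_calculus[OF x])
       (auto intro: has_field_derivative_at_within simp: has_real_derivative_iff_has_vector_derivative[symmetric])
  then show ?thesis by (simp add: f_def)
qed

lemma arctan_sin_double_div_one_minus_cos_double:
  fixes t :: real
  assumes "0 < t" "t < pi"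
  shows "arctan (sin (2 * t) / (1 - cos (2 * t))) = pi / 2 - t"
proof -
  have "sin t > 0" using assms by (simp add: sin_gt_zero)
  then have "sin (2 * t) / (1 - cos (2 * t)) = tan (pi / 2 - t)"
    by (simp add: sin_double cos_double_sin tan_def sin_diff cos_diff power2_eq_square)
  then show ?thesis using assms by (simp add: arctan_tan)
qed

lemma has_integral_arctan_sin_double_div_one_minus_cos_double:
  fixes x :: real
  assumes "0 \<le> x" "x \<le> pi"
  shows "((\<lambda>t. arctan (sin (2 * t) / (1 - cos (2 * t)))) has_integral x * (pi - x) / 2) {0..x}"
proof -
  have "((\<lambda>t. pi / 2 - t) has_integral ((pi / 2 * x - x\<^sup>2 / 2) - (pi / 2 * 0 - 0\<^sup>2 / 2))) {0..x}"
    by (rule fundamental_theorem_of_calculus[OF assms(1)])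
       (auto intro!: derivative_eq_intros simp: has_real_derivative_iff_has_vector_derivative[symmetric])
  then have lin: "((\<lambda>t. pi / 2 - t) has_integral x * (pi - x) / 2) {0..x}"
    by (simp add: power2_eq_square field_simps)
  show ?thesis
    using assms by (intro has_integral_spike[OF _ _ lin, of "{0, x}"])
      (auto simp: arctan_sin_double_div_one_minus_cos_double)
qed

lemma tendsto_suminf_power_mult:
  fixes r a :: "nat \<Rightarrow> real"
  assumes "r \<longlonglongrightarrow> 1" "\<And>j. 0 \<le> r j" "\<And>j. r j \<le> 1" "summable (\<lambda>n. \<bar>a n\<bar>)"
  shows "(\<lambda>j. \<Sum>n. r j ^ n * a n) \<longlonglongrightarrow> (\<Sum>n. a n)"
proof (rule tannerys_theorem[THEN conjunct2, THEN conjunct2, OF _ _ assms(4)])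
  show "(\<lambda>j. r j ^ n * a n) \<longlonglongrightarrow> a n" for n
    using tendsto_mult_right[OF tendsto_power[OF assms(1)], of n "a n"] by simp
  show "eventually (\<lambda>(n, j). norm (r j ^ n * a n) \<le> \<bar>a n\<bar>) (at_top \<times>\<^sub>F sequentially)"
    by (intro always_eventually)
       (auto simp: abs_mult assms(2) intro!: mult_left_le_one_le power_le_one assms(3))
qed simp

lemma sin_sq_div_sq_le: "(sin y)\<^sup>2 / (real n)\<^sup>2 \<le> 1 / (real n)\<^sup>2"
  by (intro divide_right_mono) (simp_all add: abs_square_le_1)

lemma summable_sin_sq_div_sq: "summable (\<lambda>n. (sin (real n * y))\<^sup>2 / (real n)\<^sup>2)"
  by (rule summable_comparison_test'[OF inverse_power_summable[of 2, simplified]])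
     (use sin_sq_div_sq_le in \<open>simp add: divide_inverse\<close>)

lemma sums_sin_sq_div_sq:
  fixes x :: real
  assumes x: "0 \<le> x" "x \<le> pi"
  shows "(\<lambda>n. (sin (real n * x))\<^sup>2 / (real n)\<^sup>2) sums (x * (pi - x) / 2)"
proof -
  define r where "r j = real j / real (Suc j)" for j
  define L where "L t = arctan (sin (2 * t) / (1 - cos (2 * t)))" for t
  define g where "g j t = arctan (r j * sin (2 * t) / (1 - r j * cos (2 * t)))" for j t
  have r01: "0 \<le> r j" "r j < 1" for j by (auto simp: r_def)
  have rlim: "r \<longlonglongrightarrow> 1" unfolding r_def by (rule LIMSEQ_n_over_Suc_n)
  have g_int: "(g j has_integral (\<Sum>n. r j ^ n * ((sin (real n * x))\<^sup>2 / (real n)\<^sup>2))) {0..x}" for j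
    unfolding g_def using has_integral_arctan_power_sin_sq[OF r01 x(1)] by simp
  have g_lim: "(\<lambda>j. g j t) \<longlonglongrightarrow> L t" for t
  proof (cases "cos (2 * t) = 1")
    case True
    then have "sin (2 * t) = 0" using sin_cos_squared_add[of "2 * t"] by simp
    then show ?thesis by (simp add: g_def L_def)
  next
    case False
    then show ?thesis unfolding g_def L_def
      using rlim by (auto intro!: tendsto_eq_intros)
  qed
  have "norm (g j t) \<le> pi / 2" for j t
    using arctan_bounded[of "r j * sin (2 * t) / (1 - r j * cos (2 * t))"] by (auto simp: g_def)
  from dominated_convergence(2)[OF has_integral_integrable[OF g_int] integrable_const_ivl this g_lim]
  have "(\<lambda>j. \<Sum>n. r j ^ n * ((sin (real n * x))\<^sup>2 / (real n)\<^sup>2)) \<longlonglongrightarrow> integral {0..x} L"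
    by (simp add: integral_unique[OF g_int])
  moreover have "(\<lambda>j. \<Sum>n. r j ^ n * ((sin (real n * x))\<^sup>2 / (real n)\<^sup>2)) \<longlonglongrightarrow>
                   (\<Sum>n. (sin (real n * x))\<^sup>2 / (real n)\<^sup>2)"
    using r01 summable_sin_sq_div_sq by (intro tendsto_suminf_power_mult rlim) (auto simp: less_imp_le)
  ultimately have "(\<Sum>n. (sin (real n * x))\<^sup>2 / (real n)\<^sup>2) = integral {0..x} L"
    by (rule LIMSEQ_unique[rotated])
  also have "\<dots> = x * (pi - x) / 2"
    unfolding L_def using has_integral_arctan_sin_double_div_one_minus_cos_double[OF x] by blast
  finally show ?thesis using summable_sin_sq_div_sq[of x] by (simp add: sums_iff)
qed

lemma sums_sin_sq_div_sq_double:
  fixes \<psi> :: real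
  assumes "0 \<le> \<psi>" "\<psi> \<le> pi"
  shows "(\<lambda>n. (sin (real n * (2 * \<psi>)))\<^sup>2 / (real n)\<^sup>2) sums
           (if \<psi> \<le> pi / 2 then \<psi> * (pi - 2 * \<psi>) else (pi - \<psi>) * (2 * \<psi> - pi))"
proof (cases "\<psi> \<le> pi / 2")
  case True
  then show ?thesis using sums_sin_sq_div_sq[of "2 * \<psi>"] assms by simp
next
  case False
  have "sin (real n * (2 * \<psi>)) = - sin (real n * (2 * pi - 2 * \<psi>))" for n
  proof -
    have "real n * (2 * pi - 2 * \<psi>) = 2 * real n * pi - real n * (2 * \<psi>)"
      by (simp add: algebra_simps)
    then show ?thesis using sin_diff[of "2 * real n * pi" "real n * (2 * \<psi>)"] by simp
  qed
  then have "(\<lambda>n. (sin (real n * (2 * \<psi>)))\<^sup>2 / (real n)\<^sup>2) sums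
               ((2 * pi - 2 * \<psi>) * (pi - (2 * pi - 2 * \<psi>)) / 2)"
    using sums_sin_sq_div_sq[of "2 * pi - 2 * \<psi>"] assms False by simp
  also have "(2 * pi - 2 * \<psi>) * (pi - (2 * pi - 2 * \<psi>)) / 2 = (pi - \<psi>) * (2 * \<psi> - pi)"
    by (simp add: field_simps)
  finally show ?thesis using False by simp
qed

lemma sums_odd_terms:
  fixes f :: "nat \<Rightarrow> real"
  assumes "f sums s" "(\<lambda>i. f (2 * i)) sums s\<^sub>0"
  shows "(\<lambda>i. f (2 * i + 1)) sums (s - s\<^sub>0)"
proof -
  have "(\<lambda>m. \<Sum>i<2 * m. f i) \<longlonglongrightarrow> s"
    using assms(1) LIMSEQ_subseq_LIMSEQ[of _ s "\<lambda>m. 2 * m"]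
    by (simp add: sums_def strict_mono_def o_def)
  from tendsto_diff[OF this assms(2)[unfolded sums_def]] show ?thesis
    using sum_split_even_odd[of f f] by (simp add: sums_def)
qed

lemma sums_sin_sq_div_sq_odd:
  fixes \<psi> :: real
  assumes "0 \<le> \<psi>" "\<psi> \<le> pi"
  shows "(\<lambda>i. (sin (real (2 * i + 1) * \<psi>))\<^sup>2 / (real (2 * i + 1))\<^sup>2) sums
           (if \<psi> \<le> pi / 2 then pi * \<psi> / 4 else pi * (pi - \<psi>) / 4)"
proof -
  define f where "f n = (sin (real n * \<psi>))\<^sup>2 / (real n)\<^sup>2" for n
  have "(\<lambda>i. f (2 * i)) = (\<lambda>i. 1 / 4 * ((sin (real i * (2 * \<psi>)))\<^sup>2 / (real i)\<^sup>2))"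
    by (simp add: f_def fun_eq_iff power2_eq_square mult_ac)
  with sums_mult[OF sums_sin_sq_div_sq_double[OF assms], of "1 / 4"]
  have "(\<lambda>i. f (2 * i)) sums
          (1 / 4 * (if \<psi> \<le> pi / 2 then \<psi> * (pi - 2 * \<psi>) else (pi - \<psi>) * (2 * \<psi> - pi)))"
    by simp
  from sums_odd_terms[OF sums_sin_sq_div_sq[OF assms, folded f_def] this]
  have "(\<lambda>i. f (2 * i + 1)) sums (\<psi> * (pi - \<psi>) / 2 -
          1 / 4 * (if \<psi> \<le> pi / 2 then \<psi> * (pi - 2 * \<psi>) else (pi - \<psi>) * (2 * \<psi> - pi)))" .
  moreover have "\<psi> * (pi - \<psi>) / 2 -
      1 / 4 * (if \<psi> \<le> pi / 2 then \<psi> * (pi - 2 * \<psi>) else (pi - \<psi>) * (2 * \<psi> - pi)) =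
      (if \<psi> \<le> pi / 2 then pi * \<psi> / 4 else pi * (pi - \<psi>) / 4)"
    by (simp add: field_simps)
  ultimately show ?thesis by (simp add: f_def)
qed

section \<open>Central binomial ratios\<close>

definition central_binom_ratio :: "nat \<Rightarrow> real" where
  "central_binom_ratio n = fact (2 * n) / (4 ^ n * (fact n)\<^sup>2)"

lemma central_binom_ratio_0 [simp]: "central_binom_ratio 0 = 1"
  by (simp add: central_binom_ratio_def)

lemma central_binom_ratio_pos: "central_binom_ratio n > 0"
  by (simp add: central_binom_ratio_def)

lemma central_binom_ratio_Suc:
  "central_binom_ratio (Suc n) = central_binom_ratio n * (2 * real n + 1) / (2 * real n + 2)"
proof -
  define N where "N = real n + 1"
  have "N > 0" by (simp add: N_def)
  have "fact (2 * Suc n) = (fact (2 * n) :: real) * (2 * N - 1) * (2 * N)"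
    by (simp add: algebra_simps N_def)
  moreover have "fact (Suc n) = (fact n :: real) * N"
    by (simp add: algebra_simps N_def)
  moreover have "2 * real n + 1 = 2 * N - 1" "2 * real n + 2 = 2 * N"
    by (simp_all add: N_def)
  ultimately show ?thesis
    unfolding central_binom_ratio_def using \<open>N > 0\<close> by (simp add: field_simps power2_eq_square)
qed

lemma wallis_product_central_binom_ratio:
  "(2 * real n + 1) * (central_binom_ratio n)\<^sup>2 * (\<Prod>k=1..n. 4 * real k ^ 2 / (4 * real k ^ 2 - 1)) = 1"
proof (induction n)
  case (Suc n)
  define N where "N = 2 * real n + 1"
  define P where "P n = (\<Prod>k=1..n. 4 * real k ^ 2 / (4 * real k ^ 2 - 1))" for n
  have N: "N > 0" "N + 1 > 0" "N + 2 > 0" by (simp_all add: N_def)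
  have "P (Suc n) = P n * ((N + 1)\<^sup>2 / (N * (N + 2)))"
    by (simp add: P_def prod.nat_ivl_Suc' N_def power2_eq_square algebra_simps)
  moreover have "central_binom_ratio (Suc n) = central_binom_ratio n * (N / (N + 1))"
    by (simp add: central_binom_ratio_Suc N_def add.assoc)
  moreover have "2 * real (Suc n) + 1 = N + 2" by (simp add: N_def)
  ultimately have "(2 * real (Suc n) + 1) * (central_binom_ratio (Suc n))\<^sup>2 * P (Suc n) =
      (central_binom_ratio n)\<^sup>2 * P n * ((N + 2) * (N / (N + 1))\<^sup>2 * ((N + 1)\<^sup>2 / (N * (N + 2))))"
    by (simp only: power_mult_distrib ac_simps)
  also have "(N + 2) * (N / (N + 1))\<^sup>2 * ((N + 1)\<^sup>2 / (N * (N + 2))) = N"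
    using N by (simp add: power_divide power2_eq_square)
  also have "(central_binom_ratio n)\<^sup>2 * P n * N = 1"
    using Suc.IH by (simp only: P_def N_def ac_simps)
  finally show ?case by (simp only: P_def)
qed simp

lemma central_binom_ratio_sq_le: "(2 * real n + 1) * (central_binom_ratio n)\<^sup>2 \<le> 1"
proof -
  have "1 \<le> 4 * real k ^ 2 / (4 * real k ^ 2 - 1)" if "1 \<le> k" for k
  proof -
    have "1 \<le> real k ^ 2" using that by simp
    then show ?thesis by (simp add: le_divide_eq)
  qed
  then have "1 \<le> (\<Prod>k=1..n. 4 * real k ^ 2 / (4 * real k ^ 2 - 1))"
    by (intro prod_ge_1) auto
  then have "(2 * real n + 1) * (central_binom_ratio n)\<^sup>2 * 1 \<le>
               (2 * real n + 1) * (central_binom_ratio n)\<^sup>2 * (\<Prod>k=1..n. 4 * real k ^ 2 / (4 * real k ^ 2 - 1))"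
    by (intro mult_left_mono) auto
  then show ?thesis by (simp only: wallis_product_central_binom_ratio mult_1_right)
qed

lemma tendsto_central_binom_ratio_sq:
  "(\<lambda>n. (2 * real n + 1) * (central_binom_ratio n)\<^sup>2) \<longlonglongrightarrow> 2 / pi"
proof -
  have "(\<lambda>n. inverse (\<Prod>k=1..n. 4 * real k ^ 2 / (4 * real k ^ 2 - 1))) \<longlonglongrightarrow> inverse (pi / 2)"
    by (intro tendsto_inverse wallis) simp
  moreover have "(2 * real n + 1) * (central_binom_ratio n)\<^sup>2 =
                   inverse (\<Prod>k=1..n. 4 * real k ^ 2 / (4 * real k ^ 2 - 1))" for n
    using wallis_product_central_binom_ratio[of n] by (simp add: inverse_unique mult.commute)
  ultimately show ?thesis by simp
qed

lemma tendsto_central_binom_ratio_mult: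
  fixes i j :: nat and e :: real
  shows "(\<lambda>m. (4 * real m + e) * central_binom_ratio (m + i) * central_binom_ratio (m - j))
           \<longlonglongrightarrow> 4 / pi"
proof -
  define d where "d n = (2 * real n + 1) * (central_binom_ratio n)\<^sup>2" for n
  have d: "d \<longlonglongrightarrow> 2 / pi"
    unfolding d_def by (rule tendsto_central_binom_ratio_sq)
  have c: "central_binom_ratio n = sqrt (d n) / sqrt (2 * real n + 1)" for n
    using central_binom_ratio_pos[of n] by (simp add: d_def real_sqrt_mult)
  have "(\<lambda>m. (4 * real m + e) / sqrt ((2 * real m + 2 * real i + 1) * (2 * real m - 2 * real j + 1)))
          \<longlonglongrightarrow> 2"
    by real_asymp
  moreover have "(\<lambda>m. d (m - j)) \<longlonglongrightarrow> 2 / pi"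
    by (rule LIMSEQ_offset[where k = j]) (simp add: d)
  then have "(\<lambda>m. sqrt (d (m + i) * d (m - j))) \<longlonglongrightarrow> sqrt (2 / pi * (2 / pi))"
    by (intro tendsto_real_sqrt tendsto_mult LIMSEQ_ignore_initial_segment[OF d])
  ultimately have "(\<lambda>m. (4 * real m + e) / sqrt ((2 * real m + 2 * real i + 1) * (2 * real m - 2 * real j + 1))
                        * sqrt (d (m + i) * d (m - j))) \<longlonglongrightarrow> 2 * sqrt (2 / pi * (2 / pi))"
    by (rule tendsto_mult)
  moreover have "\<forall>\<^sub>F m in sequentially.
      (4 * real m + e) / sqrt ((2 * real m + 2 * real i + 1) * (2 * real m - 2 * real j + 1))
        * sqrt (d (m + i) * d (m - j))
      = (4 * real m + e) * central_binom_ratio (m + i) * central_binom_ratio (m - j)"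
    using eventually_ge_at_top[of j]
  proof eventually_elim
    case (elim m)
    then have "2 * real (m - j) + 1 = 2 * real m - 2 * real j + 1" by (simp add: of_nat_diff)
    then show ?case
      unfolding c[of "m + i"] c[of "m - j"] real_sqrt_mult by (simp add: divide_inverse mult_ac)
  qed
  ultimately have "(\<lambda>m. (4 * real m + e) * central_binom_ratio (m + i) * central_binom_ratio (m - j))
                    \<longlonglongrightarrow> 2 * sqrt (2 / pi * (2 / pi))"
    by (rule Lim_transform_eventually)
  moreover have "2 * sqrt (2 / pi * (2 / pi)) = 4 / pi"
    by (simp only: real_sqrt_abs2) simp
  ultimately show ?thesis by simp
qed

lemma central_binom_ratio_mult_le:
  assumes "q \<le> p"
  shows "(2 * real p + 2 * real q + 2) * central_binom_ratio p * central_binom_ratio q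
           \<le> 2 * sqrt (2 * real (p - q) + 1)"
proof -
  define X where "X = 2 * real p + 1"
  define Y where "Y = 2 * real q + 1"
  have Y: "1 \<le> Y" "Y \<le> X" using assms by (auto simp: X_def Y_def)
  have cp: "(central_binom_ratio p)\<^sup>2 \<le> 1 / X"
    using central_binom_ratio_sq_le[of p] by (simp add: X_def field_simps)
  have cq: "(central_binom_ratio q)\<^sup>2 \<le> 1 / Y"
    using central_binom_ratio_sq_le[of q] by (simp add: Y_def field_simps)
  have "((X + Y) * central_binom_ratio p * central_binom_ratio q)\<^sup>2
          = (X + Y)\<^sup>2 * ((central_binom_ratio p)\<^sup>2 * (central_binom_ratio q)\<^sup>2)"
    by (simp add: power_mult_distrib)
  also have "\<dots> \<le> (2 * X)\<^sup>2 * (1 / X * (1 / Y))"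
    using Y by (intro mult_mono power_mono cp cq) auto
  also have "\<dots> = 4 * (X / Y)"
    using Y by (simp add: power2_eq_square field_simps)
  also have "\<dots> \<le> 4 * (X - Y + 1)"
  proof -
    have "X \<le> (X - Y + 1) * Y"
      using mult_nonneg_nonneg[of "Y - 1" "X - Y"] Y by (simp add: algebra_simps)
    then have "X / Y \<le> X - Y + 1" using Y by (simp add: divide_le_eq)
    then show ?thesis by simp
  qed
  finally have "(X + Y) * central_binom_ratio p * central_binom_ratio q \<le> sqrt (4 * (X - Y + 1))"
    using Y central_binom_ratio_pos[of p] central_binom_ratio_pos[of q] by (simp add: real_le_rsqrt)
  also have "4 * (X - Y + 1) = 4 * (2 * real (p - q) + 1)"
    using assms by (simp add: X_def Y_def of_nat_diff)
  also have "sqrt (4 * (2 * real (p - q) + 1)) = 2 * sqrt (2 * real (p - q) + 1)"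
    by (subst real_sqrt_mult) simp
  finally show ?thesis
    by (simp add: X_def Y_def algebra_simps)
qed

lemma sqrt_div_sq_eq_powr:
  fixes x :: real
  assumes "x > 0"
  shows "sqrt x / x\<^sup>2 = x powr (-3 / 2)"
proof -
  have "x powr (-3 / 2) = x powr (1 / 2 - 2)" by simp
  also have "\<dots> = x powr (1 / 2) / x powr 2" by (rule powr_diff)
  also have "\<dots> = sqrt x / x\<^sup>2" using assms by (simp add: powr_half_sqrt)
  finally show ?thesis by simp
qed

lemma central_binom_ratio_weight_le:
  assumes "d \<le> 1" "1 \<le> i" "i + d \<le> m"
  shows "\<bar>(4 * real m + 1 - 2 * real d) * central_binom_ratio (m + i) * central_binom_ratio (m - d - i)\<bar>
           \<le> 6 * sqrt (real i)"
proof -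
  define p q where "p = m + i" and "q = m - d - i"
  have c: "0 < central_binom_ratio p * central_binom_ratio q"
    using central_binom_ratio_pos[of p] central_binom_ratio_pos[of q] by simp
  have "0 \<le> (4 * real m + 1 - 2 * real d) * central_binom_ratio p * central_binom_ratio q"
    using assms c by (simp add: mult.assoc)
  moreover have "(4 * real m + 1 - 2 * real d) * central_binom_ratio p * central_binom_ratio q
                   \<le> (2 * real p + 2 * real q + 2) * central_binom_ratio p * central_binom_ratio q"
    unfolding mult.assoc using assms c
    by (intro mult_right_mono) (simp_all add: p_def q_def of_nat_diff)
  moreover have "\<dots> \<le> 2 * sqrt (2 * real (p - q) + 1)"
    by (rule central_binom_ratio_mult_le) (simp add: p_def q_def)
  moreover have "sqrt (2 * real (p - q) + 1) \<le> sqrt (9 * real i)"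
    using assms by (intro real_sqrt_le_mono) (simp add: p_def q_def of_nat_diff)
  moreover have "sqrt (9 * real i) = 3 * sqrt (real i)"
    by (subst real_sqrt_mult) simp
  ultimately show ?thesis by (simp add: p_def q_def)
qed

lemma tendsto_central_binom_ratio_weighted_sum:
  fixes t :: "nat \<Rightarrow> real" and d :: nat
  assumes "d \<le> 1" and t_le: "\<And>i. 1 \<le> i \<Longrightarrow> \<bar>t i\<bar> \<le> K / (real i)\<^sup>2"
  shows "(\<lambda>m. \<Sum>i<m + 1 - d. (4 * real m + 1 - 2 * real d) *
             central_binom_ratio (m + i) * central_binom_ratio (m - d - i) * t i)
           \<longlonglongrightarrow> 4 / pi * (\<Sum>i. t i)"
proof -
  define w where "w m i = (4 * real m + 1 - 2 * real d) *
                           central_binom_ratio (m + i) * central_binom_ratio (m - d - i)" for m i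
  define a where "a i m = (if i < m + 1 - d then w m i * t i else 0)" for i m
  define M where "M i = 6 * K * real i powr (-3 / 2)" for i
  have K: "0 \<le> K" using t_le[of 1] by simp
  have "summable t"
  proof (rule summable_comparison_test')
    show "summable (\<lambda>i. K * inverse (real i ^ 2))"
      by (intro summable_mult inverse_power_summable) simp
    show "norm (t i) \<le> K * inverse (real i ^ 2)" if "1 \<le> i" for i
      using t_le[OF that] by (simp add: divide_inverse)
  qed
  have a_lim: "(\<lambda>m. a i m) \<longlonglongrightarrow> 4 / pi * t i" for i
  proof (rule Lim_transform_eventually)
    show "(\<lambda>m. (4 * real m + (1 - 2 * real d)) * central_binom_ratio (m + i) *
                central_binom_ratio (m - (d + i)) * t i) \<longlonglongrightarrow> 4 / pi * t i"
      by (intro tendsto_mult_right tendsto_central_binom_ratio_mult)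
    show "\<forall>\<^sub>F m in sequentially. (4 * real m + (1 - 2 * real d)) * central_binom_ratio (m + i) *
                central_binom_ratio (m - (d + i)) * t i = a i m"
      using eventually_ge_at_top[of "i + d"]
      by eventually_elim (auto simp: a_def w_def algebra_simps)
  qed
  have "norm (a i m) \<le> M i" if "1 \<le> i" for i m
  proof (cases "i < m + 1 - d")
    case True
    then have "norm (a i m) = \<bar>w m i\<bar> * \<bar>t i\<bar>" by (simp add: a_def abs_mult)
    also have "\<dots> \<le> 6 * sqrt (real i) * (K / (real i)\<^sup>2)"
      using central_binom_ratio_weight_le[OF assms(1) that, of m] True t_le[OF that]
      by (intro mult_mono) (auto simp: w_def)
    also have "\<dots> = 6 * K * (sqrt (real i) / (real i)\<^sup>2)" by simp
    also have "\<dots> = M i"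
      using that by (simp add: M_def sqrt_div_sq_eq_powr)
    finally show ?thesis .
  qed (simp add: a_def M_def K)
  then have "\<forall>\<^sub>F (i, m) in at_top \<times>\<^sub>F sequentially. norm (a i m) \<le> M i"
    by (intro eventually_prod_sequentially[THEN iffD2]) auto
  moreover have "summable M"
    unfolding M_def by (intro summable_mult) (simp add: summable_real_powr_iff)
  ultimately have "(\<lambda>m. \<Sum>i. a i m) \<longlonglongrightarrow> (\<Sum>i. 4 / pi * t i)"
    by (intro tannerys_theorem[THEN conjunct2, THEN conjunct2, OF a_lim]) simp_all
  moreover have "(\<lambda>m. \<Sum>i. a i m) = (\<lambda>m. \<Sum>i<m + 1 - d. w m i * t i)"
    by (intro ext, subst suminf_finite[of "{..<_ + 1 - d}"]) (auto simp: a_def)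
  ultimately show ?thesis
    by (simp only: w_def suminf_mult[OF \<open>summable t\<close>])
qed

section \<open>Legendre functions at the equator\<close>

lemma coeff_funpow_pderiv:
  fixes p :: "'a::{comm_semiring_1,semiring_no_zero_divisors} poly"
  shows "coeff ((pderiv ^^ m) p) i = pochhammer (of_nat i + 1) m * coeff p (i + m)"
proof (induction m arbitrary: p i)
  case (Suc m)
  have "coeff ((pderiv ^^ Suc m) p) i = coeff ((pderiv ^^ m) (pderiv p)) i"
    by (simp only: funpow_Suc_right o_def)
  also have "\<dots> = pochhammer (of_nat i + 1) m * (of_nat (Suc (i + m)) * coeff p (Suc (i + m)))"
    by (simp add: Suc.IH coeff_pderiv)
  also have "\<dots> = pochhammer (of_nat i + 1) (Suc m) * coeff p (i + Suc m)"
    by (simp add: pochhammer_Suc algebra_simps)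
  finally show ?case .
qed simp

lemma coeff_0_funpow_pderiv:
  fixes p :: "'a::{comm_semiring_1,semiring_no_zero_divisors,semiring_char_0} poly"
  shows "coeff ((pderiv ^^ m) p) 0 = fact m * coeff p m"
  using coeff_funpow_pderiv[of m p 0] by (simp add: pochhammer_fact)

lemma coeff_power_x_sq_minus_1:
  "coeff ([:-1, 0, 1:] ^ n :: 'a::comm_ring_1 poly) i =
     (if even i \<and> i div 2 \<le> n then (-1) ^ (n - i div 2) * of_nat (n choose (i div 2)) else 0)"
proof -
  have "[:-1, 0, 1:] = monom (1::'a) 2 + [:-1:]"
    by (auto simp: poly_eq_iff coeff_monom coeff_pCons numeral_2_eq_2 split: nat.split)
  then have "[:-1, 0, 1:] ^ n = (\<Sum>k\<le>n. monom (of_nat (n choose k) * (-1) ^ (n - k) :: 'a) (2 * k))"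
    by (simp add: binomial_ring monom_power of_nat_poly poly_const_pow smult_monom mult_ac)
  then have "coeff ([:-1, 0, 1:] ^ n :: 'a poly) i =
      (\<Sum>k\<le>n. if k = i div 2 \<and> even i then of_nat (n choose k) * (-1) ^ (n - k) else 0)"
    by (auto simp: coeff_sum coeff_monom intro!: sum.cong)
  also have "\<dots> = (if even i \<and> i div 2 \<le> n then (-1) ^ (n - i div 2) * of_nat (n choose (i div 2)) else 0)"
    by (auto simp: sum.delta' mult.commute)
  finally show ?thesis .
qed

definition legendre_weight :: "nat \<Rightarrow> nat \<Rightarrow> real" where
  "legendre_weight n k = (if even (n + k)
     then central_binom_ratio ((n + k) div 2) * central_binom_ratio ((n - k) div 2) else 0)"

lemma assoc_legendre_at_0:
  "assoc_legendre n k 0 =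
     (-1) ^ k / (2 ^ n * fact n) * (fact (n + k) * coeff ([:-1, 0, 1:] ^ n) (n + k))"
  by (simp add: assoc_legendre_def poly_0_coeff_0 coeff_0_funpow_pderiv)

lemma assoc_legendre_at_0_sq:
  assumes "k \<le> n"
  shows "fact (n - k) / fact (n + k) * (assoc_legendre n k 0)\<^sup>2 = legendre_weight n k"
proof (cases "even (n + k)")
  case False
  then show ?thesis
    by (simp add: assoc_legendre_at_0 coeff_power_x_sq_minus_1 legendre_weight_def)
next
  case True
  then obtain a where a: "n + k = 2 * a" by blast
  define b where "b = n - a"
  have ab: "a \<le> n" "n = a + b" "n - k = 2 * b" "(n + k) div 2 = a" "(n - k) div 2 = b"
    using a assms by (simp_all add: b_def)
  have sign: "((-1::real) ^ m)\<^sup>2 = 1" for m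
    by (simp flip: power_mult)
  have four: "((2::real) ^ n)\<^sup>2 = 4 ^ n"
    using power_mult[of "2::real" n 2] power_mult[of "2::real" 2 n] by (simp add: mult.commute)
  have "(assoc_legendre n k 0)\<^sup>2 = (fact (2 * a) * real (n choose a))\<^sup>2 / (4 ^ n * (fact n)\<^sup>2)"
    unfolding assoc_legendre_at_0 coeff_power_x_sq_minus_1 a ab(4)
    using ab(1) sign four by (simp add: power_mult_distrib power_divide)
  also have "\<dots> = (fact (2 * a))\<^sup>2 / (4 ^ a * 4 ^ b * ((fact a)\<^sup>2 * (fact b)\<^sup>2))"
  proof -
    have choose: "real (n choose a) = fact n / (fact a * fact b)"
      using binomial_fact[OF ab(1)] by (simp add: b_def)
    show ?thesis
      unfolding choose by (simp add: ab(2) power_add field_simps power2_eq_square)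
  qed
  finally have sq: "(assoc_legendre n k 0)\<^sup>2 =
      (fact (2 * a))\<^sup>2 / (4 ^ a * 4 ^ b * ((fact a)\<^sup>2 * (fact b)\<^sup>2))" .
  show ?thesis
    unfolding sq legendre_weight_def a ab(3) central_binom_ratio_def
    by (simp add: field_simps power2_eq_square)
qed

lemma norm_assoc_legendre_at_0_sq:
  assumes "nat \<bar>j\<bar> \<le> n"
  shows "(norm_assoc_legendre n j 0)\<^sup>2 = (2 * real n + 1) / (4 * pi) * legendre_weight n (nat \<bar>j\<bar>)"
proof -
  define k where "k = nat \<bar>j\<bar>"
  have "(norm_assoc_legendre n j 0)\<^sup>2 =
          (2 * real n + 1) / (4 * pi) * (fact (n - k) / fact (n + k) * (assoc_legendre n k 0)\<^sup>2)"
    by (simp add: norm_assoc_legendre_def k_def[symmetric] Let_def power_mult_distrib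
                  flip: power_mult)
  also have "fact (n - k) / fact (n + k) * (assoc_legendre n k 0)\<^sup>2 = legendre_weight n k"
    by (rule assoc_legendre_at_0_sq) (use assms in \<open>simp add: k_def\<close>)
  finally show ?thesis by (simp add: k_def)
qed

section \<open>The limits of \<mu>\<close>

lemma sum_symmetric_int:
  fixes g :: "nat \<Rightarrow> real"
  shows "(\<Sum>j = - int n..int n. g (nat \<bar>j\<bar>)) = (\<Sum>k\<le>n. (if k = 0 then 1 else 2) * g k)"
proof (induction n)
  case (Suc n)
  have "{- int (Suc n)..int (Suc n)} = insert (int (Suc n)) (insert (- int (Suc n)) {- int n..int n})"
    by auto
  moreover have "nat (1 + int n) = Suc n" "nat (int n + 1) = Suc n" by simp_all
  ultimately show ?case using Suc.IH by simp
qed simp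

lemma s_fun_abs: "s_fun \<bar>j\<bar> \<psi> = s_fun j \<psi>"
  by (cases "j \<ge> 0") (simp_all add: s_fun_def)

lemma mu_sq_eq_sum:
  "(2 * real n + 1) / 4 * (mu n \<psi>)\<^sup>2 =
     (\<Sum>k\<le>n. (2 * real n + 1) * legendre_weight n k *
                ((if k = 0 then pi / 2 else pi) * (s_fun (int k) \<psi>)\<^sup>2))"
proof -
  have "(mu n \<psi>)\<^sup>2 = (\<Sum>j = - int n..int n.
          8 * pi\<^sup>2 / (2 * real n + 1) * \<bar>norm_assoc_legendre n j 0\<bar>\<^sup>2 * (s_fun j \<psi>)\<^sup>2)"
    unfolding mu_def by (intro real_sqrt_pow2 sum_nonneg) simp
  also have "\<dots> = (\<Sum>j = - int n..int n.
          2 * pi * legendre_weight n (nat \<bar>j\<bar>) * (s_fun (int (nat \<bar>j\<bar>)) \<psi>)\<^sup>2)"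
  proof (intro sum.cong refl)
    fix j assume "j \<in> {- int n..int n}"
    then have P: "(norm_assoc_legendre n j 0)\<^sup>2 = (2 * real n + 1) / (4 * pi) * legendre_weight n (nat \<bar>j\<bar>)"
      by (intro norm_assoc_legendre_at_0_sq) auto
    have cancel: "8 * pi\<^sup>2 / (2 * real n + 1) * ((2 * real n + 1) / (4 * pi)) = 2 * pi"
      by (simp add: power2_eq_square)
    show "8 * pi\<^sup>2 / (2 * real n + 1) * \<bar>norm_assoc_legendre n j 0\<bar>\<^sup>2 * (s_fun j \<psi>)\<^sup>2 =
               2 * pi * legendre_weight n (nat \<bar>j\<bar>) * (s_fun (int (nat \<bar>j\<bar>)) \<psi>)\<^sup>2"
      unfolding power2_abs P mult.assoc[symmetric] cancel by (simp add: s_fun_abs)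
  qed
  also have "\<dots> = (\<Sum>k\<le>n. (if k = 0 then 1 else 2) *
                    (2 * pi * legendre_weight n k * (s_fun (int k) \<psi>)\<^sup>2))"
    by (rule sum_symmetric_int)
  finally show ?thesis
    by (auto simp: sum_distrib_left intro!: sum.cong)
qed

lemma sum_atMost_parity:
  fixes h :: "nat \<Rightarrow> real"
  assumes "d \<le> 1" and "\<And>k. odd (k + d) \<Longrightarrow> h k = 0"
  shows "(\<Sum>k\<le>2 * m - d. h k) = (\<Sum>i<m + 1 - d. h (2 * i + d))"
proof -
  have "(\<Sum>i<m + 1 - d. h (2 * i + d)) = sum h ((\<lambda>i. 2 * i + d) ` {..<m + 1 - d})"
    by (simp add: sum.reindex inj_on_def)
  also have "\<dots> = (\<Sum>k\<le>2 * m - d. h k)"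
  proof (rule sum.mono_neutral_left)
    show "(\<lambda>i. 2 * i + d) ` {..<m + 1 - d} \<subseteq> {..2 * m - d}"
      using assms(1) by auto
    show "\<forall>k\<in>{..2 * m - d} - (\<lambda>i. 2 * i + d) ` {..<m + 1 - d}. h k = 0"
    proof
      fix k assume k: "k \<in> {..2 * m - d} - (\<lambda>i. 2 * i + d) ` {..<m + 1 - d}"
      show "h k = 0"
      proof (rule assms(2), rule notI)
        assume "even (k + d)"
        moreover have "k \<le> 2 * m - d" using k by simp
        ultimately have "k = 2 * ((k - d) div 2) + d" "(k - d) div 2 < m + 1 - d"
          using assms(1) by presburger+
        with k show False by blast
      qed
    qed
  qed simp
  finally show ?thesis ..
qed

text \<open>The terms j and -j of \<mu> pair up, except j = 0; hence the weight \<pi>/2 at index 0.\<close>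
definition mu_limit_term :: "nat \<Rightarrow> real \<Rightarrow> nat \<Rightarrow> real" where
  "mu_limit_term d \<psi> i = (if 2 * i + d = 0 then pi / 2 else pi) * (s_fun (int (2 * i + d)) \<psi>)\<^sup>2"

lemma mu_sq_parity_sum:
  assumes "d \<le> 1" "d \<le> m"
  shows "(4 * real m + 1 - 2 * real d) / 4 * (mu (2 * m - d) \<psi>)\<^sup>2 =
           (\<Sum>i<m + 1 - d. (4 * real m + 1 - 2 * real d) *
              central_binom_ratio (m + i) * central_binom_ratio (m - d - i) * mu_limit_term d \<psi> i)"
proof -
  have n: "2 * real (2 * m - d) + 1 = 4 * real m + 1 - 2 * real d"
    using assms by (simp add: of_nat_diff)
  have "(4 * real m + 1 - 2 * real d) / 4 * (mu (2 * m - d) \<psi>)\<^sup>2 =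
          (\<Sum>k\<le>2 * m - d. (4 * real m + 1 - 2 * real d) * legendre_weight (2 * m - d) k *
             ((if k = 0 then pi / 2 else pi) * (s_fun (int k) \<psi>)\<^sup>2))"
    using mu_sq_eq_sum[of "2 * m - d" \<psi>] by (simp only: n)
  also have "\<dots> = (\<Sum>i<m + 1 - d. (4 * real m + 1 - 2 * real d) *
                     legendre_weight (2 * m - d) (2 * i + d) * mu_limit_term d \<psi> i)"
    using assms by (subst sum_atMost_parity) (auto simp: legendre_weight_def mu_limit_term_def)
  also have "\<dots> = (\<Sum>i<m + 1 - d. (4 * real m + 1 - 2 * real d) *
              central_binom_ratio (m + i) * central_binom_ratio (m - d - i) * mu_limit_term d \<psi> i)"
  proof (intro sum.cong refl)
    fix i assume "i \<in> {..<m + 1 - d}"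
    then have "(2 * m - d + (2 * i + d)) div 2 = m + i" "(2 * m - d - (2 * i + d)) div 2 = m - d - i"
              "even (2 * m - d + (2 * i + d))"
      using assms by auto
    then show "(4 * real m + 1 - 2 * real d) * legendre_weight (2 * m - d) (2 * i + d) * mu_limit_term d \<psi> i =
               (4 * real m + 1 - 2 * real d) * central_binom_ratio (m + i) *
                 central_binom_ratio (m - d - i) * mu_limit_term d \<psi> i"
      by (simp add: legendre_weight_def)
  qed
  finally show ?thesis .
qed

lemma s_fun_sq: "k \<noteq> 0 \<Longrightarrow> (s_fun (int k) \<psi>)\<^sup>2 = 4 * ((sin (real k * \<psi>))\<^sup>2 / (real k)\<^sup>2)"
  by (simp add: s_fun_def power_divide power_mult_distrib)

lemma tendsto_mu_sq_parity:
  assumes "d \<le> 1"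
  shows "(\<lambda>m. (4 * real m + 1 - 2 * real d) / 4 * (mu (2 * m - d) \<psi>)\<^sup>2)
           \<longlonglongrightarrow> 4 / pi * (\<Sum>i. mu_limit_term d \<psi> i)"
proof (rule Lim_transform_eventually)
  show "(\<lambda>m. \<Sum>i<m + 1 - d. (4 * real m + 1 - 2 * real d) * central_binom_ratio (m + i) *
              central_binom_ratio (m - d - i) * mu_limit_term d \<psi> i)
          \<longlonglongrightarrow> 4 / pi * (\<Sum>i. mu_limit_term d \<psi> i)"
  proof (rule tendsto_central_binom_ratio_weighted_sum[OF assms])
    fix i :: nat assume "1 \<le> i"
    then have "2 * i + d \<noteq> 0" by simp
    then have "mu_limit_term d \<psi> i = pi * (4 * ((sin (real (2 * i + d) * \<psi>))\<^sup>2 / (real (2 * i + d))\<^sup>2))"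
      unfolding mu_limit_term_def s_fun_sq[OF \<open>2 * i + d \<noteq> 0\<close>] by simp
    also have "\<dots> \<le> pi * (4 * (1 / (2 * real i)\<^sup>2))"
    proof (intro mult_left_mono order.trans[OF sin_sq_div_sq_le])
      show "1 / (real (2 * i + d))\<^sup>2 \<le> 1 / (2 * real i)\<^sup>2"
        using \<open>1 \<le> i\<close> by (intro divide_left_mono power_mono) auto
    qed simp_all
    finally show "\<bar>mu_limit_term d \<psi> i\<bar> \<le> pi / (real i)\<^sup>2"
      by (simp add: mu_limit_term_def power_mult_distrib)
  qed
  show "\<forall>\<^sub>F m in sequentially. (\<Sum>i<m + 1 - d. (4 * real m + 1 - 2 * real d) *
          central_binom_ratio (m + i) * central_binom_ratio (m - d - i) * mu_limit_term d \<psi> i) =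
        (4 * real m + 1 - 2 * real d) / 4 * (mu (2 * m - d) \<psi>)\<^sup>2"
    using eventually_ge_at_top[of d] by eventually_elim (use assms in \<open>simp only: mu_sq_parity_sum\<close>)
qed

lemma sums_mu_limit_term_odd:
  assumes "0 \<le> \<psi>" "\<psi> \<le> pi"
  shows "mu_limit_term 1 \<psi> sums (pi / 4 * (if \<psi> \<le> pi / 2 then 4 * pi * \<psi> else 4 * pi\<^sup>2 - 4 * pi * \<psi>))"
proof -
  have f: "mu_limit_term 1 \<psi> = (\<lambda>i. 4 * pi * ((sin (real (2 * i + 1) * \<psi>))\<^sup>2 / (real (2 * i + 1))\<^sup>2))"
    by (simp add: fun_eq_iff mu_limit_term_def s_fun_sq del: of_nat_Suc)
  have v: "4 * pi * (if \<psi> \<le> pi / 2 then pi * \<psi> / 4 else pi * (pi - \<psi>) / 4) =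
                 pi / 4 * (if \<psi> \<le> pi / 2 then 4 * pi * \<psi> else 4 * pi\<^sup>2 - 4 * pi * \<psi>)"
    by (simp add: power2_eq_square field_simps)
  show ?thesis
    unfolding f v[symmetric] by (rule sums_mult[OF sums_sin_sq_div_sq_odd[OF assms]])
qed

lemma sums_mu_limit_term_even:
  assumes "0 \<le> \<psi>" "\<psi> \<le> pi"
  shows "mu_limit_term 0 \<psi> sums (pi / 4 * (if \<psi> \<le> pi / 2 then 4 * pi * \<psi> else 12 * pi * \<psi> - 4 * pi\<^sup>2))"
proof -
  have f: "mu_limit_term 0 \<psi> = (\<lambda>i. pi * ((sin (real i * (2 * \<psi>)))\<^sup>2 / (real i)\<^sup>2) +
                                     (if i = 0 then 2 * pi * \<psi>\<^sup>2 else 0))"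
    by (auto simp: fun_eq_iff mu_limit_term_def s_fun_def power_divide power_mult_distrib mult_ac)
  have v: "pi * (if \<psi> \<le> pi / 2 then \<psi> * (pi - 2 * \<psi>) else (pi - \<psi>) * (2 * \<psi> - pi)) +
                   2 * pi * \<psi>\<^sup>2 =
                 pi / 4 * (if \<psi> \<le> pi / 2 then 4 * pi * \<psi> else 12 * pi * \<psi> - 4 * pi\<^sup>2)"
    by (simp add: power2_eq_square algebra_simps)
  show ?thesis
    unfolding f v[symmetric]
    by (rule sums_add[OF sums_mult[OF sums_sin_sq_div_sq_double[OF assms]] sums_single])
qed

theorem theorem5:
  fixes \<psi> :: real
  assumes "0 \<le> \<psi>" and "\<psi> \<le> pi"
  shows "(\<lambda>m::nat. (4 * real m - 1) / 4 * (mu (2 * m - 1) \<psi>)\<^sup>2)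
           \<longlonglongrightarrow> (if \<psi> \<le> pi / 2 then 4 * pi * \<psi> else 4 * pi\<^sup>2 - 4 * pi * \<psi>) \<and>
         (\<lambda>m::nat. (4 * real m + 1) / 4 * (mu (2 * m) \<psi>)\<^sup>2)
           \<longlonglongrightarrow> (if \<psi> \<le> pi / 2 then 4 * pi * \<psi> else 12 * pi * \<psi> - 4 * pi\<^sup>2)"
proof
  show "(\<lambda>m. (4 * real m - 1) / 4 * (mu (2 * m - 1) \<psi>)\<^sup>2)
          \<longlonglongrightarrow> (if \<psi> \<le> pi / 2 then 4 * pi * \<psi> else 4 * pi\<^sup>2 - 4 * pi * \<psi>)"
    using tendsto_mu_sq_parity[of 1 \<psi>]
    unfolding sums_unique[OF sums_mu_limit_term_odd[OF assms], symmetric] by simp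
  show "(\<lambda>m. (4 * real m + 1) / 4 * (mu (2 * m) \<psi>)\<^sup>2)
          \<longlonglongrightarrow> (if \<psi> \<le> pi / 2 then 4 * pi * \<psi> else 12 * pi * \<psi> - 4 * pi\<^sup>2)"
    using tendsto_mu_sq_parity[of 0 \<psi>]
    unfolding sums_unique[OF sums_mu_limit_term_even[OF assms], symmetric] by simp
qed

end
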